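(* Let $G=K(n_1,\dots,n_s)$ be a complete $s$-partite graph ($s\ge 2$) with parts $V_1,\dots,V_s$, $|V_j|=n_j$. If $j\in\{1,\dots,s\}$ satisfies $n_j\ge 2$, then $\chi_1(G)=\chi_1(G-V_j)+1$.
   Context: A map $f:V(G)\to\{1,\dots,k\}$ is a $1$-relaxed $k$-coloring if every vertex $u$ has at most one neighbor $v$ with $f(v)=f(u)$; $\chi_1(G)$ is the minimum $k$ for which such a coloring exists. $G-V_j$ is the graph obtained by deleting the vertices of $V_j$. *)

theory Defs
  imports Main
begin

text \<open>A simple graph is given by a vertex set V and a symmetric irreflexive
  adjacency relation E. Induced subgraphs are obtained by shrinking V.\<close>

definition relaxed1_coloring ::
  "'a set \<Rightarrow> ('a \<Rightarrow> 'a \<Rightarrow> bool) \<Rightarrow> nat \<Rightarrow> ('a \<Rightarrow> nat) \<Rightarrow> bool" where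
  "relaxed1_coloring V E k f \<longleftrightarrow>
     (\<forall>u\<in>V. f u \<in> {1..k}) \<and>
     (\<forall>u\<in>V. card {v\<in>V. E u v \<and> f v = f u} \<le> 1)"

definition chi1 :: "'a set \<Rightarrow> ('a \<Rightarrow> 'a \<Rightarrow> bool) \<Rightarrow> nat" where
  "chi1 V E = (LEAST k. \<exists>f. relaxed1_coloring V E k f)"

text \<open>Complete multipartite graph K(n_1,...,n_s): vertex (j,i) lies in part V_j
  (1 \<le> j \<le> s, i < n_j); two vertices are adjacent iff they lie in different parts.\<close>

definition kpart_vertices :: "nat \<Rightarrow> (nat \<Rightarrow> nat) \<Rightarrow> (nat \<times> nat) set" where
  "kpart_vertices s n = {(j, i). j \<in> {1..s} \<and> i < n j}"

definition kpart_part :: "(nat \<Rightarrow> nat) \<Rightarrow> nat \<Rightarrow> (nat \<times> nat) set" where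
  "kpart_part n j = {(j, i) | i. i < n j}"

definition kpart_adj :: "nat \<times> nat \<Rightarrow> nat \<times> nat \<Rightarrow> bool" where
  "kpart_adj x y \<longleftrightarrow> fst x \<noteq> fst y"

end

theory Submission
  imports Defs
begin

(* The part V_j is an independent set containing two vertices a, b and joined to every
   other vertex.  A colouring of G - V_j extends to G by giving V_j one fresh colour.
   Conversely, all of G - V_j are common neighbours of a and b, so in a colouring of G
   each of their colours occurs at most once in G - V_j; merging the colour of b into
   that of a therefore keeps G - V_j 1-relaxed and frees one colour. *)

lemma relaxed1_coloring_injective:
  assumes "inj_on f V" "f ` V \<subseteq> {1..k}"
  shows "relaxed1_coloring V E k f"
proof -
  have "card {v\<in>V. E u v \<and> f v = f u} \<le> 1" if "u \<in> V" for u
  proof -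
    have "{v\<in>V. E u v \<and> f v = f u} \<subseteq> {u}"
      using assms(1) that by (auto dest: inj_onD)
    then show ?thesis
      using card_mono[of "{u}"] by fastforce
  qed
  then show ?thesis
    using assms(2) unfolding relaxed1_coloring_def by blast
qed

lemma relaxed1_colorable:
  assumes "finite V"
  shows "\<exists>f. relaxed1_coloring V E (card V) f"
proof -
  obtain h where "bij_betw h V {0..<card V}"
    using ex_bij_betw_finite_nat[OF assms] by blast
  then have "inj_on (Suc \<circ> h) V" "(Suc \<circ> h) ` V \<subseteq> {1..card V}"
    by (auto simp: bij_betw_def inj_on_def Suc_le_eq dest: equalityD1)
  then show ?thesis
    using relaxed1_coloring_injective by blast
qed

lemma chi1_attained:
  assumes "finite V"
  shows "\<exists>f. relaxed1_coloring V E (chi1 V E) f"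
  using relaxed1_colorable[OF assms, of E] unfolding chi1_def by (rule LeastI)

lemma chi1_le:
  assumes "relaxed1_coloring V E k f"
  shows "chi1 V E \<le> k"
  unfolding chi1_def using assms by (blast intro: Least_le)

lemma relaxed1_coloring_subset:
  assumes "finite V" "relaxed1_coloring V E k f" "W \<subseteq> V"
  shows "relaxed1_coloring W E k f"
proof -
  have "card {v\<in>W. E u v \<and> f v = f u} \<le> card {v\<in>V. E u v \<and> f v = f u}" for u
    using assms(1,3) by (intro card_mono) auto
  then show ?thesis
    using assms(2,3) unfolding relaxed1_coloring_def by (meson le_trans subsetD)
qed

lemma relaxed1_coloring_extend_fresh_colour:
  assumes "relaxed1_coloring W E k f" "W \<subseteq> V"
    and "\<forall>u\<in>V - W. \<forall>v\<in>V - W. \<not> E u v"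
  shows "relaxed1_coloring V E (Suc k) (\<lambda>v. if v \<in> W then f v else Suc k)"
    (is "relaxed1_coloring V E (Suc k) ?g")
proof -
  have f_range: "\<forall>u\<in>W. f u \<in> {1..k}"
    using assms(1) unfolding relaxed1_coloring_def by blast
  have classes: "card {v\<in>V. E u v \<and> ?g v = ?g u} \<le> 1" if "u \<in> V" for u
  proof (cases "u \<in> W")
    case True
    then have "{v\<in>V. E u v \<and> ?g v = ?g u} = {v\<in>W. E u v \<and> f v = f u}"
      using assms(2) f_range by auto
    then show ?thesis
      using assms(1) True unfolding relaxed1_coloring_def by simp
  next
    case False
    then have "{v\<in>V. E u v \<and> ?g v = ?g u} = {}"
      using that assms(3) f_range by auto
    then show ?thesis
      by (metis card.empty zero_le_one)
  qed
  moreover have "?g u \<in> {1..Suc k}" for u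
    using f_range by auto
  ultimately show ?thesis
    unfolding relaxed1_coloring_def by blast
qed

lemma relaxed1_coloring_merge_colours:
  assumes "finite V" "irreflp E" "relaxed1_coloring V E k f" "c \<in> {1..k}"
    and "card {v\<in>V. f v = c \<or> f v = d} \<le> 2"
  shows "relaxed1_coloring V E k (\<lambda>v. if f v = d then c else f v)"
    (is "relaxed1_coloring V E k ?g")
proof -
  have classes: "card {v\<in>V. E u v \<and> ?g v = ?g u} \<le> 1" if "u \<in> V" for u
  proof (cases "?g u = c")
    case True
    let ?merged = "{v\<in>V. f v = c \<or> f v = d}"
    have "{v\<in>V. E u v \<and> ?g v = ?g u} \<subseteq> ?merged - {u}"
      using True assms(2) by (auto simp: irreflp_def split: if_splits)
    then have "card {v\<in>V. E u v \<and> ?g v = ?g u} \<le> card (?merged - {u})"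
      using assms(1) by (intro card_mono) auto
    also have "\<dots> = card ?merged - 1"
      using True that by (auto split: if_splits)
    finally show ?thesis
      using assms(5) by linarith
  next
    case False
    then have "{v\<in>V. E u v \<and> ?g v = ?g u} = {v\<in>V. E u v \<and> f v = f u}"
      by (auto split: if_splits)
    then show ?thesis
      using assms(3) that unfolding relaxed1_coloring_def by simp
  qed
  moreover have "?g u \<in> {1..k}" if "u \<in> V" for u
    using assms(3,4) that unfolding relaxed1_coloring_def by auto
  ultimately show ?thesis
    unfolding relaxed1_coloring_def by blast
qed

lemma relaxed1_coloring_drop_unused_colour:
  assumes "relaxed1_coloring V E k f" "d \<in> {1..k}" "\<forall>v\<in>V. f v \<noteq> d"
  shows "relaxed1_coloring V E (k - 1) (\<lambda>v. if f v = k then d else f v)"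
    (is "relaxed1_coloring V E (k - 1) ?g")
proof -
  have f_range: "\<forall>u\<in>V. f u \<in> {1..k}"
    using assms(1) unfolding relaxed1_coloring_def by blast
  have same_classes: "{v\<in>V. E u v \<and> ?g v = ?g u} = {v\<in>V. E u v \<and> f v = f u}"
    if "u \<in> V" for u
    using assms(3) that by auto
  have "card {v\<in>V. E u v \<and> ?g v = ?g u} \<le> 1" if "u \<in> V" for u
    unfolding same_classes[OF that] using assms(1) that unfolding relaxed1_coloring_def by blast
  moreover have "?g u \<in> {1..k - 1}" if "u \<in> V" for u
  proof -
    have "f u \<in> {1..k}" "f u \<noteq> d"
      using f_range assms(3) that by auto
    show ?thesis
    proof (cases "f u = k")
      case True
      with \<open>f u \<noteq> d\<close> assms(2) show ?thesis
        by (simp; linarith)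
    next
      case False
      with \<open>f u \<in> {1..k}\<close> show ?thesis
        by (simp; linarith)
    qed
  qed
  ultimately show ?thesis
    unfolding relaxed1_coloring_def by blast
qed

lemma relaxed1_coloring_common_neighbours_save_colour:
  assumes "finite V" "symp E" "irreflp E" "relaxed1_coloring V E k f" "W \<subseteq> V"
    and "a \<in> V" "b \<in> V" "a \<noteq> b" "\<forall>x\<in>W. E a x \<and> E b x"
  shows "\<exists>g. relaxed1_coloring W E (k - 1) g"
proof -
  have f_range: "f a \<in> {1..k}" "f b \<in> {1..k}"
    using assms(4,6,7) unfolding relaxed1_coloring_def by auto
  have at_most_once: "card {v\<in>W. f v = f x} \<le> 1" if "x \<in> {a, b}" for x
  proof -
    have "card {v\<in>W. f v = f x} \<le> card {v\<in>V. E x v \<and> f v = f x}"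
      using assms(1,5,9) that by (intro card_mono) auto
    also have "\<dots> \<le> 1"
      using assms(4,6,7) that unfolding relaxed1_coloring_def by auto
    finally show ?thesis .
  qed
  have "{v\<in>W. f v = f a \<or> f v = f b} = {v\<in>W. f v = f a} \<union> {v\<in>W. f v = f b}"
    by auto
  then have "card {v\<in>W. f v = f a \<or> f v = f b}
      \<le> card {v\<in>W. f v = f a} + card {v\<in>W. f v = f b}"
    by (simp only: card_Un_le)
  also have "\<dots> \<le> 2"
    using at_most_once[of a] at_most_once[of b] by simp
  finally have "card {v\<in>W. f v = f a \<or> f v = f b} \<le> 2" .
  moreover have "finite W"
    using assms(1,5) finite_subset by blast
  moreover have "relaxed1_coloring W E k f"
    using assms(1,4,5) by (rule relaxed1_coloring_subset)
  ultimately have merged: "relaxed1_coloring W E k (\<lambda>v. if f v = f b then f a else f v)"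
    using relaxed1_coloring_merge_colours assms(3) f_range(1) by blast
  \<comment> \<open>If f a = f b the merge changes nothing, and that colour is absent from W:
    a vertex of W carrying it would see both a and b in its own colour.\<close>
  have "\<forall>v\<in>W. (if f v = f b then f a else f v) \<noteq> f b"
  proof (intro ballI notI)
    fix v
    assume "v \<in> W" and "(if f v = f b then f a else f v) = f b"
    then have "f a = f v" "f b = f v" "v \<in> V"
      using assms(5) by (auto split: if_splits)
    moreover have "E v a" "E v b"
      using \<open>v \<in> W\<close> assms(2,9) by (auto dest: sympD)
    ultimately have "{a, b} \<subseteq> {w\<in>V. E v w \<and> f w = f v}"
      using assms(6,7) by auto
    then have "card {a, b} \<le> card {w\<in>V. E v w \<and> f w = f v}"
      using assms(1) by (intro card_mono) auto
    also have "\<dots> \<le> 1"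
      using assms(4) \<open>v \<in> V\<close> unfolding relaxed1_coloring_def by blast
    finally show False
      using assms(8) by simp
  qed
  then show ?thesis
    using relaxed1_coloring_drop_unused_colour[OF merged f_range(2)] by blast
qed

lemma chi1_join_independent_set:
  assumes "finite V" "symp E" "irreflp E" "W \<subseteq> V"
    and "\<forall>u\<in>V - W. \<forall>v\<in>V - W. \<not> E u v" "\<forall>u\<in>V - W. \<forall>v\<in>W. E u v"
    and "a \<in> V - W" "b \<in> V - W" "a \<noteq> b"
  shows "chi1 V E = chi1 W E + 1"
proof -
  have "finite W"
    using assms(1,4) finite_subset by blast
  then obtain f_W where "relaxed1_coloring W E (chi1 W E) f_W"
    using chi1_attained by blast
  then have "relaxed1_coloring V E (Suc (chi1 W E)) (\<lambda>v. if v \<in> W then f_W v else Suc (chi1 W E))"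
    using assms(4,5) by (rule relaxed1_coloring_extend_fresh_colour)
  then have upper: "chi1 V E \<le> chi1 W E + 1"
    using chi1_le by fastforce
  obtain f_V where f_V: "relaxed1_coloring V E (chi1 V E) f_V"
    using chi1_attained assms(1) by blast
  have "\<exists>g. relaxed1_coloring W E (chi1 V E - 1) g"
    using assms(6-9)
    by (intro relaxed1_coloring_common_neighbours_save_colour[OF assms(1-3) f_V assms(4)]) auto
  then have lower: "chi1 W E \<le> chi1 V E - 1"
    using chi1_le by blast
  have "chi1 V E \<ge> 1"
    using f_V assms(7) unfolding relaxed1_coloring_def by auto
  with upper lower show ?thesis
    by linarith
qed

lemma finite_kpart_vertices: "finite (kpart_vertices s n)"
proof -
  have "kpart_vertices s n = Sigma {1..s} (\<lambda>j. {..<n j})"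
    unfolding kpart_vertices_def by auto
  then show ?thesis
    by simp
qed

lemma symp_kpart_adj: "symp kpart_adj"
  unfolding symp_def kpart_adj_def by simp

lemma irreflp_kpart_adj: "irreflp kpart_adj"
  unfolding irreflp_def kpart_adj_def by simp

lemma kpart_part_subset:
  assumes "j \<in> {1..s}"
  shows "kpart_part n j \<subseteq> kpart_vertices s n"
  using assms unfolding kpart_part_def kpart_vertices_def by auto

theorem corollary4p2:
  fixes s :: nat and n :: "nat \<Rightarrow> nat" and j :: nat
  assumes "s \<ge> 2"
    and "\<forall>i\<in>{1..s}. n i \<ge> 1"
    and "j \<in> {1..s}"
    and "n j \<ge> 2"
  shows "chi1 (kpart_vertices s n) kpart_adj
         = chi1 (kpart_vertices s n - kpart_part n j) kpart_adj + 1"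
proof -
  let ?V = "kpart_vertices s n" and ?P = "kpart_part n j"
  have removed_part: "?V - (?V - ?P) = ?P"
    using kpart_part_subset[OF assms(3)] by blast
  have "(j, 0) \<in> ?P" "(j, 1) \<in> ?P"
    using assms(4) unfolding kpart_part_def by auto
  moreover have "\<forall>u\<in>?P. \<forall>v\<in>?P. \<not> kpart_adj u v" "\<forall>u\<in>?P. \<forall>v\<in>?V - ?P. kpart_adj u v"
    unfolding kpart_part_def kpart_vertices_def kpart_adj_def by auto
  ultimately show ?thesis
    using finite_kpart_vertices symp_kpart_adj irreflp_kpart_adj
    by (intro chi1_join_independent_set[where a = "(j, 0)" and b = "(j, 1)"])
      (simp_all add: removed_part)
qed

end
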